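(* Let $T$ be a linear trellis. If $T$ is nonmergeable and one-to-one, then $T$ is connected and fragment one-to-one. Conversely, if $T$ is almost reduced, connected and fragment one-to-one, then $T$ is nonmergeable and one-to-one.
   Context: Let $\mathbb{F}$ be a finite field and $n\ge1$; indices are taken in $\mathbb{Z}_n$. A trellis $T$ of length $n$ over $\mathbb{F}$ consists of pairwise disjoint finite vertex sets $V_i(T)$, $i\in\mathbb{Z}_n$, and edge sets $E_i(T)\subseteq V_i(T)\times\mathbb{F}\times V_{i+1}(T)$; $(v,\alpha,w)\in E_i(T)$ is an edge from $v$ to $w$ with label $\alpha$. Trellises are trim. $T$ is linear if each $V_i(T)$ is an $\mathbb{F}$-vector space and each $E_i(T)$ a subspace. A path of length $m$ is $v_0\alpha_0v_1\cdots\alpha_{m-1}v_m$ with each $(v_j,\alpha_j,v_{j+1})$ an edge; its label sequence is $\alpha_0\cdots\alpha_{m-1}$. A cycle is a closed path of length $n$ starting in $V_0(T)$; $C(T)$ is the set of label sequences of cycles. $T$ is one-to-one if distinct cycles have distinct label sequences; almost reduced if every vertex lies on a cycle; connected if for any two distinct vertices $v,w$ there is a directed path from $v$ to $w$. $T$ is mergeable if for some $i$ and $v\ne w\in V_i(T)$, identifying $v$ and $w$ yields a trellis representing the same code; otherwise nonmergeable. $T$ is fragment one-to-one if any two distinct paths of length $n$ starting in the same vertex set $V_i(T)$ (for any $i$) have distinct label sequences. *)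

theory Defs
  imports Main
begin

text \<open>A trellis of length n: vertex sets V i and edge sets E i for i < n
  (indices in Z_n realised as {0..<n} with successor (i+1) mod n).
  Labels come from a finite field of type 'f.\<close>

definition nxt :: "nat \<Rightarrow> nat \<Rightarrow> nat" where
  "nxt n i = Suc i mod n"

definition prv :: "nat \<Rightarrow> nat \<Rightarrow> nat" where
  "prv n i = (i + n - 1) mod n"

definition vertices :: "nat \<Rightarrow> (nat \<Rightarrow> 'v set) \<Rightarrow> 'v set" where
  "vertices n V = (\<Union>i<n. V i)"

definition edges :: "nat \<Rightarrow> (nat \<Rightarrow> ('v \<times> 'f \<times> 'v) set) \<Rightarrow> ('v \<times> 'f \<times> 'v) set" where
  "edges n E = (\<Union>i<n. E i)"

definition trellis :: "nat \<Rightarrow> (nat \<Rightarrow> 'v set) \<Rightarrow> (nat \<Rightarrow> ('v \<times> 'f::{field,finite} \<times> 'v) set) \<Rightarrow> bool" where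
  "trellis n V E \<longleftrightarrow> n \<ge> 1
     \<and> (\<forall>i<n. finite (V i))
     \<and> (\<forall>i<n. \<forall>j<n. i \<noteq> j \<longrightarrow> V i \<inter> V j = {})
     \<and> (\<forall>i<n. E i \<subseteq> V i \<times> UNIV \<times> V (nxt n i))
     \<and> (\<forall>i<n. \<forall>v\<in>V i. (\<exists>a w. (v, a, w) \<in> E i) \<and> (\<exists>u a. (u, a, v) \<in> E (prv n i)))"

definition vector_space_on :: "'v set \<Rightarrow> ('v \<Rightarrow> 'v \<Rightarrow> 'v) \<Rightarrow> 'v \<Rightarrow> ('f::field \<Rightarrow> 'v \<Rightarrow> 'v) \<Rightarrow> bool" where
  "vector_space_on S add z sm \<longleftrightarrow>
     z \<in> S
     \<and> (\<forall>x\<in>S. \<forall>y\<in>S. add x y \<in> S)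
     \<and> (\<forall>a. \<forall>x\<in>S. sm a x \<in> S)
     \<and> (\<forall>x\<in>S. \<forall>y\<in>S. \<forall>w\<in>S. add (add x y) w = add x (add y w))
     \<and> (\<forall>x\<in>S. \<forall>y\<in>S. add x y = add y x)
     \<and> (\<forall>x\<in>S. add z x = x)
     \<and> (\<forall>x\<in>S. \<exists>y\<in>S. add x y = z)
     \<and> (\<forall>a. \<forall>x\<in>S. \<forall>y\<in>S. sm a (add x y) = add (sm a x) (sm a y))
     \<and> (\<forall>a b. \<forall>x\<in>S. sm (a + b) x = add (sm a x) (sm b x))
     \<and> (\<forall>a b. \<forall>x\<in>S. sm (a * b) x = sm a (sm b x))
     \<and> (\<forall>x\<in>S. sm 1 x = x)"

text \<open>Linear trellis: each V i carries an 'f-vector space structure and each E i is a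
  subspace of V i \<times> 'f \<times> V (i+1) (componentwise operations).\<close>
definition linear_trellis :: "nat \<Rightarrow> (nat \<Rightarrow> 'v set) \<Rightarrow> (nat \<Rightarrow> ('v \<times> 'f::{field,finite} \<times> 'v) set) \<Rightarrow> bool" where
  "linear_trellis n V E \<longleftrightarrow>
    (\<exists>(add :: nat \<Rightarrow> 'v \<Rightarrow> 'v \<Rightarrow> 'v) (z :: nat \<Rightarrow> 'v) (sm :: nat \<Rightarrow> 'f \<Rightarrow> 'v \<Rightarrow> 'v).
      \<forall>i<n. vector_space_on (V i) (add i) (z i) (sm i)
        \<and> (z i, 0, z (nxt n i)) \<in> E i
        \<and> (\<forall>(x, a, y)\<in>E i. \<forall>(x', a', y')\<in>E i.
              (add i x x', a + a', add (nxt n i) y y') \<in> E i)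
        \<and> (\<forall>s. \<forall>(x, a, y)\<in>E i. (sm i s x, s * a, sm (nxt n i) s y) \<in> E i))"

definition is_path :: "nat \<Rightarrow> (nat \<Rightarrow> ('v \<times> 'f \<times> 'v) set) \<Rightarrow> nat \<Rightarrow> 'v list \<Rightarrow> 'f list \<Rightarrow> bool" where
  "is_path n E m vs as \<longleftrightarrow> length vs = Suc m \<and> length as = m
     \<and> (\<forall>j<m. (vs ! j, as ! j, vs ! Suc j) \<in> edges n E)"

definition cycles :: "nat \<Rightarrow> (nat \<Rightarrow> 'v set) \<Rightarrow> (nat \<Rightarrow> ('v \<times> 'f \<times> 'v) set) \<Rightarrow> ('v list \<times> 'f list) set" where
  "cycles n V E = {(vs, as). is_path n E n vs as \<and> vs ! 0 \<in> V 0 \<and> vs ! n = vs ! 0}"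

definition code :: "nat \<Rightarrow> (nat \<Rightarrow> 'v set) \<Rightarrow> (nat \<Rightarrow> ('v \<times> 'f \<times> 'v) set) \<Rightarrow> 'f list set" where
  "code n V E = snd ` cycles n V E"

definition one_to_one :: "nat \<Rightarrow> (nat \<Rightarrow> 'v set) \<Rightarrow> (nat \<Rightarrow> ('v \<times> 'f \<times> 'v) set) \<Rightarrow> bool" where
  "one_to_one n V E \<longleftrightarrow> (\<forall>c\<in>cycles n V E. \<forall>d\<in>cycles n V E. c \<noteq> d \<longrightarrow> snd c \<noteq> snd d)"

definition almost_reduced :: "nat \<Rightarrow> (nat \<Rightarrow> 'v set) \<Rightarrow> (nat \<Rightarrow> ('v \<times> 'f \<times> 'v) set) \<Rightarrow> bool" where
  "almost_reduced n V E \<longleftrightarrow> (\<forall>v\<in>vertices n V. \<exists>(vs, as)\<in>cycles n V E. v \<in> set vs)"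

definition connected_trellis :: "nat \<Rightarrow> (nat \<Rightarrow> 'v set) \<Rightarrow> (nat \<Rightarrow> ('v \<times> 'f \<times> 'v) set) \<Rightarrow> bool" where
  "connected_trellis n V E \<longleftrightarrow> (\<forall>v\<in>vertices n V. \<forall>w\<in>vertices n V. v \<noteq> w \<longrightarrow>
     (\<exists>m vs as. is_path n E m vs as \<and> vs ! 0 = v \<and> vs ! m = w))"

definition mg :: "'v \<Rightarrow> 'v \<Rightarrow> 'v \<Rightarrow> 'v" where
  "mg v w x = (if x = w then v else x)"

definition merge_V :: "'v \<Rightarrow> 'v \<Rightarrow> (nat \<Rightarrow> 'v set) \<Rightarrow> nat \<Rightarrow> 'v set" where
  "merge_V v w V = (\<lambda>k. mg v w ` V k)"

definition merge_E :: "'v \<Rightarrow> 'v \<Rightarrow> (nat \<Rightarrow> ('v \<times> 'f \<times> 'v) set) \<Rightarrow> nat \<Rightarrow> ('v \<times> 'f \<times> 'v) set" where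
  "merge_E v w E = (\<lambda>k. (\<lambda>(x, a, y). (mg v w x, a, mg v w y)) ` E k)"

definition mergeable :: "nat \<Rightarrow> (nat \<Rightarrow> 'v set) \<Rightarrow> (nat \<Rightarrow> ('v \<times> 'f \<times> 'v) set) \<Rightarrow> bool" where
  "mergeable n V E \<longleftrightarrow> (\<exists>i<n. \<exists>v\<in>V i. \<exists>w\<in>V i. v \<noteq> w \<and>
     code n (merge_V v w V) (merge_E v w E) = code n V E)"

definition fragment_one_to_one :: "nat \<Rightarrow> (nat \<Rightarrow> 'v set) \<Rightarrow> (nat \<Rightarrow> ('v \<times> 'f \<times> 'v) set) \<Rightarrow> bool" where
  "fragment_one_to_one n V E \<longleftrightarrow> (\<forall>i<n. \<forall>vs as vs' as'.
     is_path n E n vs as \<and> vs ! 0 \<in> V i \<and> is_path n E n vs' as' \<and> vs' ! 0 \<in> V i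
     \<and> (vs, as) \<noteq> (vs', as') \<longrightarrow> as \<noteq> as')"

end

theory Submission
  imports Defs
begin

text \<open>Call a walk of length \<open>n\<close>, once round the trellis, a lap. By linearity the laps starting
  at level \<open>i\<close> form a linear relation on \<open>V i\<close>, and labels add along with endpoints.

  If two distinct vertices of \<open>V i\<close> cannot be merged, some word is only in the merged code; it
  comes from a lap between the two vertices whose labels carry no closed lap. Applied to \<open>0\<close> and
  every \<open>y\<close>, this makes \<open>V i\<close> the union of the subspaces of vertices reachable from \<open>0\<close>
  and of vertices reaching \<open>0\<close> by a lap, so one of them is all of \<open>V i\<close>, and by linearity
  any two vertices of \<open>V i\<close> are joined by a lap: the trellis is connected. Two laps with the
  same labels differ by a lap with zero labels; if it is closed, one-to-oneness makes it the
  zero cycle, otherwise adding it to the separating lap of its endpoints gives a contradiction.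

  Conversely, if \<open>v \<noteq> w\<close> in \<open>V i\<close> can be merged, a path from \<open>v\<close> to \<open>w\<close> shrinks to a
  single lap by almost reducedness and linearity; merging closes it, and since the code is
  unchanged, another lap from level \<open>i\<close> has the same labels, against fragment one-to-oneness.\<close>

section \<open>Walks and laps\<close>

definition walk :: "nat \<Rightarrow> (nat \<Rightarrow> ('v \<times> 'f \<times> 'v) set) \<Rightarrow> (nat \<Rightarrow> 'v) \<Rightarrow> (nat \<Rightarrow> 'f) \<Rightarrow> nat \<Rightarrow> bool" where
  "walk n E f g m \<longleftrightarrow> (\<forall>j<m. (f j, g j, f (Suc j)) \<in> edges n E)"

definition lap :: "nat \<Rightarrow> (nat \<Rightarrow> ('v \<times> 'f \<times> 'v) set) \<Rightarrow> 'v \<Rightarrow> (nat \<Rightarrow> 'f) \<Rightarrow> 'v \<Rightarrow> bool" where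
  "lap n E x g y \<longleftrightarrow> (\<exists>f. walk n E f g n \<and> f 0 = x \<and> f n = y)"

text \<open>The label list, read from level 0 on, of a closed lap that starts at level \<open>i\<close>
  with labels \<open>g\<close>.\<close>
definition rot :: "nat \<Rightarrow> nat \<Rightarrow> (nat \<Rightarrow> 'f) \<Rightarrow> 'f list" where
  "rot n i g = map (\<lambda>t. g ((t + (n - i)) mod n)) [0..<n]"

lemma edge_in_edges: "k < n \<Longrightarrow> e \<in> E k \<Longrightarrow> e \<in> edges n E"
  unfolding edges_def by blast

lemma is_path_walk: "is_path n E m vs as \<Longrightarrow> walk n E (nth vs) (nth as) m"
  unfolding is_path_def walk_def by auto

lemma walk_is_path: "walk n E f g m \<Longrightarrow> is_path n E m (map f [0..<Suc m]) (map g [0..<m])"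
  unfolding is_path_def walk_def by (auto simp del: upt_Suc)

lemma walk_cong_labels: "walk n E f g m \<Longrightarrow> (\<And>j. j < m \<Longrightarrow> g j = g' j) \<Longrightarrow> walk n E f g' m"
  unfolding walk_def by simp

lemma walk_take: "walk n E f g (a + b) \<Longrightarrow> walk n E f g a"
  unfolding walk_def by simp

lemma walk_drop: "walk n E f g (a + b) \<Longrightarrow> walk n E (\<lambda>j. f (a + j)) (\<lambda>j. g (a + j)) b"
  unfolding walk_def by simp

lemma walk_append:
  assumes "walk n E f g a" and "walk n E f' g' b" and "f' 0 = f a"
  shows "walk n E (\<lambda>t. if t \<le> a then f t else f' (t - a)) (\<lambda>t. if t < a then g t else g' (t - a)) (a + b)"
  unfolding walk_def
proof (intro allI impI)
  fix j assume j: "j < a + b"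
  show "((if j \<le> a then f j else f' (j - a)), (if j < a then g j else g' (j - a)),
         (if Suc j \<le> a then f (Suc j) else f' (Suc j - a))) \<in> edges n E"
  proof (cases "j < a")
    case True
    then show ?thesis using assms(1) unfolding walk_def by simp
  next
    case False
    then have "j - a < b" "Suc j - a = Suc (j - a)" using j by auto
    then show ?thesis using False assms(2,3) unfolding walk_def by (auto simp: le_Suc_eq)
  qed
qed

lemma walk_rotate:
  assumes "walk n E f g n" and "f n = f 0"
  shows "walk n E (\<lambda>t. f ((t + r) mod n)) (\<lambda>t. g ((t + r) mod n)) n"
  unfolding walk_def
proof (intro allI impI)
  fix t assume t: "t < n"
  define s where "s = (t + r) mod n"
  have "s < n" using t by (simp add: s_def)
  then have "(f s, g s, f (Suc s)) \<in> edges n E" and "f (Suc s mod n) = f (Suc s)"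
    using assms by (auto simp: walk_def mod_Suc)
  moreover have "(Suc t + r) mod n = Suc s mod n" by (simp add: s_def mod_Suc_eq)
  ultimately show "(f ((t + r) mod n), g ((t + r) mod n), f ((Suc t + r) mod n)) \<in> edges n E"
    by (simp add: s_def)
qed

lemma mod_add_mod_add_cancel:
  fixes t a b n :: nat
  assumes "t < n" and "a + b = n"
  shows "((t + a) mod n + b) mod n = t"
proof -
  have "((t + a) mod n + b) mod n = (t + a + b) mod n"
    by (rule mod_add_left_eq)
  also have "t + a + b = t + n" using assms by simp
  finally show ?thesis using assms by simp
qed

lemma rot_nth: "i < n \<Longrightarrow> t < n \<Longrightarrow> rot n i g ! ((t + i) mod n) = g t"
  using mod_add_mod_add_cancel[of t n i "n - i"] unfolding rot_def by simp

lemma rot_rotated_list: "length as = n \<Longrightarrow> i < n \<Longrightarrow> rot n i (\<lambda>t. as ! ((t + i) mod n)) = as"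
  using mod_add_mod_add_cancel[of _ n "n - i" i] unfolding rot_def by (auto intro: nth_equalityI)

lemma lap_cong_labels: "(\<And>t. t < n \<Longrightarrow> g t = g' t) \<Longrightarrow> lap n E x g y \<longleftrightarrow> lap n E x g' y"
  unfolding lap_def by (metis walk_cong_labels)

locale trim_trellis =
  fixes n :: nat and V :: "nat \<Rightarrow> 'v set" and E :: "nat \<Rightarrow> ('v \<times> 'f::{field,finite} \<times> 'v) set"
  assumes trellis: "trellis n V E"
begin

lemma n_pos: "0 < n"
  using trellis unfolding trellis_def by auto

lemma level_unique: "i < n \<Longrightarrow> j < n \<Longrightarrow> x \<in> V i \<Longrightarrow> x \<in> V j \<Longrightarrow> i = j"
  using trellis unfolding trellis_def by blast

lemma edge_levels: "i < n \<Longrightarrow> (x, a, y) \<in> E i \<Longrightarrow> x \<in> V i \<and> y \<in> V (nxt n i)"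
  using trellis unfolding trellis_def by blast

lemma nxt_mod_add: "nxt n ((i + j) mod n) = (i + Suc j) mod n"
  unfolding nxt_def by (simp add: mod_Suc_eq)

lemma walk_edge_at_level:
  assumes w: "walk n E f g m" and "f 0 \<in> V i" and "i < n" and j: "j < m"
  shows "f j \<in> V ((i + j) mod n) \<and> (f j, g j, f (Suc j)) \<in> E ((i + j) mod n)"
  using j
proof (induction j)
  case 0
  obtain k where k: "k < n" "(f 0, g 0, f 1) \<in> E k"
    using w "0" unfolding walk_def edges_def by auto
  then have "k = i" using edge_levels level_unique assms(2,3) by blast
  then show ?case using k assms(2,3) by simp
next
  case (Suc j)
  have "f (Suc j) \<in> V ((i + Suc j) mod n)"
    using Suc edge_levels n_pos nxt_mod_add by (metis Suc_lessD mod_less_divisor)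
  moreover obtain k where k: "k < n" "(f (Suc j), g (Suc j), f (Suc (Suc j))) \<in> E k"
    using w Suc.prems unfolding walk_def edges_def by auto
  ultimately show ?case using edge_levels level_unique n_pos by (metis mod_less_divisor)
qed

lemma walk_level:
  assumes w: "walk n E f g m" and f0: "f 0 \<in> V i" and i: "i < n" and j: "j \<le> m"
  shows "f j \<in> V ((i + j) mod n)"
proof (cases j)
  case 0
  then show ?thesis using f0 i by simp
next
  case (Suc j')
  then show ?thesis using walk_edge_at_level[OF w f0 i, of j'] j edge_levels nxt_mod_add n_pos
    by (metis Suc_le_lessD mod_less_divisor)
qed

lemma walk_edge_level:
  "walk n E f g m \<Longrightarrow> f 0 \<in> V i \<Longrightarrow> i < n \<Longrightarrow> j < m \<Longrightarrow> (f j, g j, f (Suc j)) \<in> E ((i + j) mod n)"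
  using walk_edge_at_level by blast

lemma walk_from: "v \<in> V k \<Longrightarrow> k < n \<Longrightarrow> \<exists>f g. walk n E f g m \<and> f 0 = v"
proof (induction m arbitrary: v k)
  case 0
  then show ?case unfolding walk_def by auto
next
  case (Suc m)
  obtain a u where e: "(v, a, u) \<in> E k"
    using trellis Suc.prems unfolding trellis_def by blast
  moreover have "nxt n k < n" using n_pos unfolding nxt_def by simp
  ultimately obtain f g where "walk n E f g m" "f 0 = u"
    using Suc edge_levels by blast
  then have "walk n E (case_nat v f) (case_nat a g) (Suc m)"
    using e Suc.prems unfolding walk_def edges_def by (auto split: nat.split)
  then show ?case by force
qed

lemma walk_to: "w \<in> V k \<Longrightarrow> k < n \<Longrightarrow> \<exists>f g j. j < n \<and> walk n E f g m \<and> f 0 \<in> V j \<and> f m = w"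
proof (induction m arbitrary: w k)
  case 0
  then show ?case unfolding walk_def by auto
next
  case (Suc m)
  obtain f g j where fg: "j < n" "walk n E f g m" "f 0 \<in> V j" "f m = w"
    using Suc by blast
  obtain u a where e: "(u, a, f 0) \<in> E (prv n j)"
    using trellis fg unfolding trellis_def by blast
  have "prv n j < n" using n_pos unfolding prv_def by simp
  moreover have "walk n E (case_nat u f) (case_nat a g) (Suc m)"
    using fg e calculation unfolding walk_def edges_def by (auto split: nat.split)
  ultimately show ?case using e edge_levels fg(4) by force
qed

lemma lap_level: "lap n E x g y \<Longrightarrow> x \<in> V i \<Longrightarrow> i < n \<Longrightarrow> y \<in> V i"
  unfolding lap_def using walk_level by fastforce

lemma lap_from: "x \<in> V i \<Longrightarrow> i < n \<Longrightarrow> \<exists>g y. lap n E x g y"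
  unfolding lap_def using walk_from by blast

lemma lap_to:
  assumes y: "y \<in> V i" and i: "i < n"
  shows "\<exists>g x. x \<in> V i \<and> lap n E x g y"
proof -
  obtain f g j where fg: "j < n" "walk n E f g n" "f 0 \<in> V j" "f n = y"
    using walk_to[OF y i] by blast
  then have "y \<in> V j" using walk_level[OF fg(2,3,1), of n] by simp
  then have "j = i" using level_unique fg(1) i y by blast
  then show ?thesis using fg unfolding lap_def by blast
qed

lemma cycle_level: "(vs, as) \<in> cycles n V E \<Longrightarrow> j \<le> n \<Longrightarrow> vs ! j \<in> V (j mod n)"
  unfolding cycles_def using walk_level[OF is_path_walk] n_pos by fastforce

lemma cycle_rotate_lap:
  assumes "(vs, as) \<in> cycles n V E"
  shows "lap n E (vs ! (r mod n)) (\<lambda>t. as ! ((t + r) mod n)) (vs ! (r mod n))"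
proof -
  have "walk n E (nth vs) (nth as) n" and "vs ! n = vs ! 0"
    using assms is_path_walk unfolding cycles_def by auto
  then show ?thesis
    using walk_rotate[of n E "nth vs" "nth as" r] n_pos unfolding lap_def by fastforce
qed

lemma closed_lap_cycle:
  assumes w: "walk n E f g n" and cl: "f n = f 0" and f0: "f 0 \<in> V i" and i: "i < n"
  shows "(map (\<lambda>t. f ((t + (n - i)) mod n)) [0..<Suc n], rot n i g) \<in> cycles n V E"
proof -
  let ?f = "\<lambda>t. f ((t + (n - i)) mod n)" and ?g = "\<lambda>t. g ((t + (n - i)) mod n)"
  have "is_path n E n (map ?f [0..<Suc n]) (map ?g [0..<n])"
    using walk_is_path[OF walk_rotate[OF w cl]] .
  moreover have "?f 0 \<in> V 0"
    using walk_level[OF w f0 i, of "(n - i) mod n"] i by (simp add: mod_add_right_eq)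
  ultimately show ?thesis unfolding cycles_def rot_def by (simp del: upt_Suc)
qed

lemma rot_in_code_iff: "i < n \<Longrightarrow> rot n i g \<in> code n V E \<longleftrightarrow> (\<exists>x\<in>V i. lap n E x g x)"
proof
  assume i: "i < n" and "rot n i g \<in> code n V E"
  then obtain vs where cy: "(vs, rot n i g) \<in> cycles n V E"
    unfolding code_def by force
  have "lap n E (vs ! i) (\<lambda>t. rot n i g ! ((t + i) mod n)) (vs ! i)"
    using cycle_rotate_lap[OF cy, of i] i by simp
  moreover have "lap n E (vs ! i) (\<lambda>t. rot n i g ! ((t + i) mod n)) (vs ! i) \<longleftrightarrow> lap n E (vs ! i) g (vs ! i)"
    by (rule lap_cong_labels) (rule rot_nth[OF i])
  ultimately have "lap n E (vs ! i) g (vs ! i)" by blast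
  moreover have "vs ! i \<in> V i" using cycle_level[OF cy, of i] i by simp
  ultimately show "\<exists>x\<in>V i. lap n E x g x" by blast
next
  assume "i < n" and "\<exists>x\<in>V i. lap n E x g x"
  then show "rot n i g \<in> code n V E"
    unfolding lap_def code_def using closed_lap_cycle by (metis image_eqI snd_conv)
qed

end

section \<open>Merging two vertices\<close>

lemma mg_eq_iff: "mg v w a = mg v w b \<longleftrightarrow> a = b \<or> (a = v \<and> b = w) \<or> (a = w \<and> b = v)"
  unfolding mg_def by auto

lemma merge_edge: "(x, a, y) \<in> E k \<Longrightarrow> (mg v w x, a, mg v w y) \<in> merge_E v w E k"
  unfolding merge_E_def by force

lemma walk_merge: "walk n E f g m \<Longrightarrow> walk n (merge_E v w E) (mg v w \<circ> f) g m"
  unfolding walk_def edges_def using merge_edge by fastforce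

lemma lap_merge: "lap n E x g y \<Longrightarrow> lap n (merge_E v w E) (mg v w x) g (mg v w y)"
  unfolding lap_def using walk_merge by fastforce

lemma cycle_merge:
  assumes "(vs, as) \<in> cycles n V E"
  shows "(map (mg v w) vs, as) \<in> cycles n (merge_V v w V) (merge_E v w E)"
proof -
  have p: "is_path n E n vs as" and "vs ! 0 \<in> V 0" and "vs ! n = vs ! 0"
    using assms unfolding cycles_def by auto
  moreover have "is_path n (merge_E v w E) n (map (mg v w) vs) as"
    using p walk_merge[OF is_path_walk[OF p]] unfolding is_path_def walk_def by simp
  moreover have "length vs = Suc n" using p unfolding is_path_def by simp
  ultimately show ?thesis unfolding cycles_def merge_V_def by simp
qed

lemma code_subset_merge: "code n V E \<subseteq> code n (merge_V v w V) (merge_E v w E)"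
proof
  fix as assume "as \<in> code n V E"
  then obtain vs where "(vs, as) \<in> cycles n V E" unfolding code_def by force
  then show "as \<in> code n (merge_V v w V) (merge_E v w E)"
    unfolding code_def using cycle_merge by (metis image_eqI snd_conv)
qed

context trim_trellis
begin

lemma mg_off_level: "v \<in> V i \<Longrightarrow> w \<in> V i \<Longrightarrow> i < n \<Longrightarrow> k < n \<Longrightarrow> k \<noteq> i \<Longrightarrow> x \<in> V k \<Longrightarrow> mg v w x = x"
  using level_unique[of k i x] unfolding mg_def by auto

lemma trim_trellis_merge:
  assumes i: "i < n" and v: "v \<in> V i" and w: "w \<in> V i"
  shows "trim_trellis n (merge_V v w V) (merge_E v w E)"
proof -
  have disjoint: "merge_V v w V k \<inter> merge_V v w V l = {}" if kl: "k < n" "l < n" "k \<noteq> l" for k l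
  proof -
    have "mg v w x \<noteq> mg v w y" if x: "x \<in> V k" and y: "y \<in> V l" for x y
    proof -
      have "x \<noteq> y" using level_unique[of k l x] kl x y by auto
      moreover have "x \<notin> {v, w} \<or> y \<notin> {v, w}"
        using level_unique[of k i x] level_unique[of l i y] kl x y i v w by auto
      ultimately show ?thesis unfolding mg_eq_iff by blast
    qed
    then show ?thesis unfolding merge_V_def by blast
  qed
  have edges: "merge_E v w E k \<subseteq> merge_V v w V k \<times> UNIV \<times> merge_V v w V (nxt n k)" if "k < n" for k
    using that edge_levels unfolding merge_E_def merge_V_def by fastforce
  have trim: "(\<exists>a y. (x, a, y) \<in> merge_E v w E k) \<and> (\<exists>u a. (u, a, x) \<in> merge_E v w E (prv n k))"
    if k: "k < n" and x: "x \<in> merge_V v w V k" for k x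
  proof -
    obtain x0 where x0: "x0 \<in> V k" "x = mg v w x0" using x unfolding merge_V_def by auto
    then show ?thesis using trellis k merge_edge unfolding trellis_def by metis
  qed
  have "\<forall>k<n. finite (merge_V v w V k)"
    using trellis unfolding trellis_def merge_V_def by simp
  then show ?thesis
    using n_pos disjoint edges trim unfolding trim_trellis_def trellis_def by simp
qed

text \<open>Away from level \<open>i\<close> merging changes nothing, so a closed lap of the merged trellis
  lifts edge by edge to a lap of the original one; only its two ends may be split apart.\<close>
lemma lap_lift_merge:
  assumes i: "i < n" and v: "v \<in> V i" and w: "w \<in> V i"
    and lap': "lap n (merge_E v w E) x' g x'" and x': "x' \<in> merge_V v w V i"
  shows "\<exists>x y. x \<in> V i \<and> lap n E x g y \<and> mg v w x = mg v w y"
proof -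
  interpret M: trim_trellis n "merge_V v w V" "merge_E v w E"
    using trim_trellis_merge[OF i v w] .
  obtain f' where f': "walk n (merge_E v w E) f' g n" "f' 0 = x'" "f' n = x'"
    using lap' unfolding lap_def by blast
  have "\<exists>x y. (x, g j, y) \<in> E ((i + j) mod n) \<and> mg v w x = f' j \<and> mg v w y = f' (Suc j)"
    if "j < n" for j
    using M.walk_edge_level[OF f'(1) _ i that] f'(2) x' unfolding merge_E_def by fastforce
  then obtain X Y where XY: "\<And>j. j < n \<Longrightarrow> (X j, g j, Y j) \<in> E ((i + j) mod n)
      \<and> mg v w (X j) = f' j \<and> mg v w (Y j) = f' (Suc j)"
    by metis
  have chain: "Y j = X (Suc j)" if "Suc j < n" for j
  proof -
    let ?k = "(i + Suc j) mod n"
    have k: "?k < n" "?k \<noteq> i"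
      using i that mod_eq_dvd_iff_nat[of i "i + Suc j" n] by (auto dest: dvd_imp_le)
    have "Y j \<in> V ?k" "X (Suc j) \<in> V ?k"
      using XY[of j] XY[of "Suc j"] edge_levels nxt_mod_add that by (metis Suc_lessD mod_less_divisor n_pos)+
    then show ?thesis using XY[of j] XY[of "Suc j"] that mg_off_level[OF v w i k] by simp
  qed
  define f where "f j = (if j < n then X j else Y (n - 1))" for j
  have "walk n E f g n"
    unfolding walk_def edges_def
  proof (intro allI impI)
    fix j assume j: "j < n"
    have "f (Suc j) = Y j"
      using chain[of j] j unfolding f_def by (auto simp: not_less_eq intro: arg_cong[of _ _ Y])
    then show "(f j, g j, f (Suc j)) \<in> (\<Union>k<n. E k)"
      using XY[OF j] j n_pos unfolding f_def by auto
  qed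
  moreover have "f 0 \<in> V i" using XY[of 0] edge_levels i n_pos unfolding f_def by auto
  moreover have "mg v w (f 0) = mg v w (f n)"
    using XY[of 0] XY[of "n - 1"] f' n_pos unfolding f_def by simp
  ultimately show ?thesis unfolding lap_def by blast
qed

text \<open>A word of the merged code that is not in the code comes from a closed lap through the
  merged vertex, which unmerges to a lap between \<open>x\<close> and \<open>y\<close>.\<close>
lemma not_mergeable_separating_lap:
  assumes nm: "\<not> mergeable n V E" and i: "i < n" and x: "x \<in> V i" and y: "y \<in> V i" and xy: "x \<noteq> y"
  shows "\<exists>g. (lap n E x g y \<or> lap n E y g x) \<and> (\<forall>u\<in>V i. \<not> lap n E u g u)"
proof -
  interpret M: trim_trellis n "merge_V x y V" "merge_E x y E"
    using trim_trellis_merge[OF i x y] .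
  obtain as where as: "as \<in> code n (merge_V x y V) (merge_E x y E)" "as \<notin> code n V E"
    using nm i x y xy code_subset_merge[of n V E x y] unfolding mergeable_def by blast
  then obtain vs where cy: "(vs, as) \<in> cycles n (merge_V x y V) (merge_E x y E)"
    unfolding code_def by force
  define g where "g t = as ! ((t + i) mod n)" for t
  have "as = rot n i g"
    using cy rot_rotated_list[of as n i] i unfolding g_def cycles_def is_path_def by simp
  then have closed: "\<forall>u\<in>V i. \<not> lap n E u g u" using as(2) rot_in_code_iff[OF i] by blast
  have "lap n (merge_E x y E) (vs ! i) g (vs ! i)" "vs ! i \<in> merge_V x y V i"
    using M.cycle_rotate_lap[OF cy, of i] M.cycle_level[OF cy, of i] i unfolding g_def by simp_all
  then obtain u u' where "u \<in> V i" "lap n E u g u'" "mg x y u = mg x y u'"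
    using lap_lift_merge[OF i x y] by blast
  then show ?thesis using closed unfolding mg_eq_iff by blast
qed

lemma almost_reduced_closed_lap:
  assumes ar: "almost_reduced n V E" and i: "i < n" and x: "x \<in> V i"
  shows "\<exists>g. lap n E x g x"
proof -
  have "x \<in> vertices n V" using i x unfolding vertices_def by blast
  then obtain vs as where cy: "(vs, as) \<in> cycles n V E" and "x \<in> set vs"
    using ar unfolding almost_reduced_def by blast
  moreover have "length vs = Suc n" using cy unfolding cycles_def is_path_def by simp
  ultimately obtain j where "j \<le> n" "vs ! j = x" by (metis in_set_conv_nth less_Suc_eq_le)
  then have "vs ! (j mod n) = x" using cy unfolding cycles_def by (cases "j = n") auto
  then show ?thesis using cycle_rotate_lap[OF cy] by metis
qed

lemma fragment_one_to_one_walks_eq: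
  assumes "fragment_one_to_one n V E" and "i < n"
    and "walk n E f g n" and "walk n E f' g n" and "f 0 \<in> V i" and "f' 0 \<in> V i" and "j \<le> n"
  shows "f j = f' j"
proof -
  have "\<forall>t\<in>{0..<Suc n}. f t = f' t"
    using assms(1)[unfolded fragment_one_to_one_def, rule_format, of i "map f [0..<Suc n]" "map g [0..<n]"
        "map f' [0..<Suc n]" "map g [0..<n]"]
      walk_is_path[OF assms(3)] walk_is_path[OF assms(4)] assms(2,5,6)
    by (simp del: upt_Suc) blast
  then show ?thesis using assms(7) by simp
qed

lemma one_to_one_closed_walks_eq:
  assumes oo: "one_to_one n V E" and i: "i < n"
    and w: "walk n E f g n" "walk n E f' g n" and f0: "f 0 \<in> V i" "f' 0 \<in> V i"
    and cl: "f n = f 0" "f' n = f' 0" and j: "j \<le> n"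
  shows "f j = f' j"
proof -
  have rotated_eq: "f j = f' j" if "j < n" for j
  proof -
    have "map (\<lambda>t. f ((t + (n - i)) mod n)) [0..<Suc n] = map (\<lambda>t. f' ((t + (n - i)) mod n)) [0..<Suc n]"
      using closed_lap_cycle[OF w(1) cl(1) f0(1) i] closed_lap_cycle[OF w(2) cl(2) f0(2) i] oo
      unfolding one_to_one_def by (metis Pair_inject snd_conv)
    then have "map (\<lambda>t. f ((t + (n - i)) mod n)) [0..<Suc n] ! ((j + i) mod n)
        = map (\<lambda>t. f' ((t + (n - i)) mod n)) [0..<Suc n] ! ((j + i) mod n)" by (rule arg_cong)
    then have "f (((j + i) mod n + (n - i)) mod n) = f' (((j + i) mod n + (n - i)) mod n)"
      using n_pos by (simp del: upt_Suc add: less_SucI)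
    then show ?thesis using mod_add_mod_add_cancel[OF that, of i "n - i"] i by simp
  qed
  show ?thesis
    using rotated_eq[of j] rotated_eq[of 0] j cl n_pos by (cases "j = n") auto
qed

lemma one_to_one_if_fragment_one_to_one:
  assumes "fragment_one_to_one n V E"
  shows "one_to_one n V E"
  unfolding one_to_one_def
proof (intro ballI impI)
  fix c d assume c: "c \<in> cycles n V E" and d: "d \<in> cycles n V E" and "c \<noteq> d"
  moreover obtain vs as vs' as' where "c = (vs, as)" "d = (vs', as')" by fastforce
  moreover have "is_path n E n vs as" "vs ! 0 \<in> V 0" "is_path n E n vs' as'" "vs' ! 0 \<in> V 0"
    using c d calculation unfolding cycles_def by auto
  ultimately show "snd c \<noteq> snd d"
    using assms[unfolded fragment_one_to_one_def, rule_format, of 0 vs as vs' as'] n_pos by auto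
qed

end

section \<open>Linear trellises\<close>

context
  fixes S :: "'v set" and add :: "'v \<Rightarrow> 'v \<Rightarrow> 'v" and z :: 'v and sm :: "'f::field \<Rightarrow> 'v \<Rightarrow> 'v"
  assumes vs: "vector_space_on S add z sm"
begin

lemma vs_zero_closed: "z \<in> S"
  using vs unfolding vector_space_on_def by (elim conjE) simp

lemma vs_add_closed: "x \<in> S \<Longrightarrow> y \<in> S \<Longrightarrow> add x y \<in> S"
  using vs unfolding vector_space_on_def by (elim conjE) simp

lemma vs_smult_closed: "x \<in> S \<Longrightarrow> sm a x \<in> S"
  using vs unfolding vector_space_on_def by (elim conjE) simp

lemma vs_add_assoc: "x \<in> S \<Longrightarrow> y \<in> S \<Longrightarrow> u \<in> S \<Longrightarrow> add (add x y) u = add x (add y u)"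
  using vs unfolding vector_space_on_def by (elim conjE) simp

lemma vs_add_commute: "x \<in> S \<Longrightarrow> y \<in> S \<Longrightarrow> add x y = add y x"
  using vs unfolding vector_space_on_def by (elim conjE) simp

lemma vs_add_zero_left: "x \<in> S \<Longrightarrow> add z x = x"
  using vs unfolding vector_space_on_def by (elim conjE) simp

lemma vs_add_zero_right: "x \<in> S \<Longrightarrow> add x z = x"
  using vs_add_zero_left vs_add_commute vs_zero_closed by metis

lemma vs_smult_add_left: "x \<in> S \<Longrightarrow> sm (a + b) x = add (sm a x) (sm b x)"
  using vs unfolding vector_space_on_def by (elim conjE) simp

lemma vs_add_inverse: "x \<in> S \<Longrightarrow> \<exists>y\<in>S. add x y = z"
  using vs unfolding vector_space_on_def by (elim conjE) blast

lemma vs_smult_one: "x \<in> S \<Longrightarrow> sm 1 x = x"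
  using vs unfolding vector_space_on_def by (elim conjE) simp

lemma vs_diff_self: assumes x: "x \<in> S" shows "add x (sm (-1) x) = z"
proof -
  have zero: "sm 0 x = z"
  proof -
    have y: "sm 0 x \<in> S" using vs_smult_closed x .
    then obtain y' where y': "y' \<in> S" "add (sm 0 x) y' = z"
      using vs_add_inverse[OF y] by blast
    have "add (sm 0 x) (sm 0 x) = sm 0 x"
      using vs_smult_add_left[OF x, of 0 0] by simp
    then have "z = add (sm 0 x) (add (sm 0 x) y')" using y y' vs_add_assoc by metis
    then show ?thesis using y y' vs_add_zero_right by simp
  qed
  show ?thesis
    using vs_smult_add_left[OF x, of 1 "-1"] zero vs_smult_one[OF x] by simp
qed

lemma vs_add_diff_cancel: "x \<in> S \<Longrightarrow> y \<in> S \<Longrightarrow> add (add x y) (sm (-1) y) = x"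
  using vs_add_assoc vs_diff_self vs_add_zero_right vs_smult_closed by metis

lemma vs_add_diff_cancel_left': "x \<in> S \<Longrightarrow> y \<in> S \<Longrightarrow> add (add y x) (sm (-1) y) = x"
  using vs_add_diff_cancel vs_add_commute by metis

lemma vs_add_diff_inverse: "x \<in> S \<Longrightarrow> y \<in> S \<Longrightarrow> add y (add x (sm (-1) y)) = x"
  using vs_add_diff_cancel_left' vs_add_assoc vs_smult_closed by metis

lemma vs_diff_eq_zeroD:
  assumes x: "x \<in> S" and y: "y \<in> S" and "add x (sm (-1) y) = z"
  shows "x = y"
proof -
  have y': "sm (-1) y \<in> S" using vs_smult_closed[OF y] .
  have "x = add x (add (sm (-1) y) y)"
    using vs_diff_self[OF y] vs_add_commute[OF y y'] vs_add_zero_right[OF x] by simp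
  also have "\<dots> = add z y" using vs_add_assoc[OF x y' y] assms(3) by simp
  finally show ?thesis using vs_add_zero_left[OF y] by simp
qed

end

locale linear_trim_trellis = trim_trellis n V E
    for n and V :: "nat \<Rightarrow> 'v set" and E :: "nat \<Rightarrow> ('v \<times> 'f::{field,finite} \<times> 'v) set" +
  fixes add :: "nat \<Rightarrow> 'v \<Rightarrow> 'v \<Rightarrow> 'v" and z :: "nat \<Rightarrow> 'v" and sm :: "nat \<Rightarrow> 'f \<Rightarrow> 'v \<Rightarrow> 'v"
  assumes vector_space: "i < n \<Longrightarrow> vector_space_on (V i) (add i) (z i) (sm i)"
    and zero_edge: "i < n \<Longrightarrow> (z i, 0, z (nxt n i)) \<in> E i"
    and add_edge: "i < n \<Longrightarrow> (x, a, y) \<in> E i \<Longrightarrow> (x', a', y') \<in> E i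
      \<Longrightarrow> (add i x x', a + a', add (nxt n i) y y') \<in> E i"
    and smult_edge: "i < n \<Longrightarrow> (x, a, y) \<in> E i \<Longrightarrow> (sm i s x, s * a, sm (nxt n i) s y) \<in> E i"
begin

abbreviation diff :: "nat \<Rightarrow> 'v \<Rightarrow> 'v \<Rightarrow> 'v" where
  "diff i x y \<equiv> add i x (sm i (-1) y)"

lemma walk_add:
  assumes i: "i < n" and w1: "walk n E f1 g1 m" and w2: "walk n E f2 g2 m"
    and "f1 0 \<in> V i" and "f2 0 \<in> V i"
  shows "walk n E (\<lambda>j. add ((i + j) mod n) (f1 j) (f2 j)) (\<lambda>j. g1 j + g2 j) m"
  unfolding walk_def
proof (intro allI impI)
  fix j assume j: "j < m"
  have k: "(i + j) mod n < n" using n_pos by simp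
  show "(add ((i + j) mod n) (f1 j) (f2 j), g1 j + g2 j, add ((i + Suc j) mod n) (f1 (Suc j)) (f2 (Suc j)))
      \<in> edges n E"
    using add_edge[OF k walk_edge_level[OF w1 _ i j] walk_edge_level[OF w2 _ i j]] assms
      edge_in_edges[OF k] nxt_mod_add by metis
qed

lemma walk_smult:
  assumes i: "i < n" and w: "walk n E f g m" and "f 0 \<in> V i"
  shows "walk n E (\<lambda>j. sm ((i + j) mod n) s (f j)) (\<lambda>j. s * g j) m"
  unfolding walk_def
proof (intro allI impI)
  fix j assume j: "j < m"
  have k: "(i + j) mod n < n" using n_pos by simp
  show "(sm ((i + j) mod n) s (f j), s * g j, sm ((i + Suc j) mod n) s (f (Suc j))) \<in> edges n E"
    using smult_edge[OF k walk_edge_level[OF w _ i j]] assms edge_in_edges[OF k] nxt_mod_add by metis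
qed

lemma walk_diff:
  assumes i: "i < n" and w1: "walk n E f1 g1 m" and w2: "walk n E f2 g2 m"
    and f1: "f1 0 \<in> V i" and f2: "f2 0 \<in> V i"
  shows "walk n E (\<lambda>j. diff ((i + j) mod n) (f1 j) (f2 j)) (\<lambda>j. g1 j - g2 j) m"
proof -
  have "walk n E (\<lambda>j. diff ((i + j) mod n) (f1 j) (f2 j)) (\<lambda>j. g1 j + -1 * g2 j) m"
    using walk_add[OF i w1 walk_smult[OF i w2 f2, of "-1"] f1] vs_smult_closed[OF vector_space[OF i] f2] i
    by simp
  then show ?thesis by (rule walk_cong_labels) simp
qed

lemma walk_zero: "walk n E (\<lambda>j. z ((i + j) mod n)) (\<lambda>_. 0) m"
  unfolding walk_def
proof (intro allI impI)
  fix j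
  have k: "(i + j) mod n < n" using n_pos by simp
  show "(z ((i + j) mod n), 0, z ((i + Suc j) mod n)) \<in> edges n E"
    using zero_edge[OF k] edge_in_edges[OF k] nxt_mod_add by metis
qed

lemma lap_add:
  assumes i: "i < n" and "x \<in> V i" and "x' \<in> V i" and "lap n E x g y" and "lap n E x' g' y'"
  shows "lap n E (add i x x') (\<lambda>t. g t + g' t) (add i y y')"
  using assms walk_add[OF i] unfolding lap_def by fastforce

lemma lap_diff:
  assumes i: "i < n" and "x \<in> V i" and "x' \<in> V i" and "lap n E x g y" and "lap n E x' g' y'"
  shows "lap n E (diff i x x') (\<lambda>t. g t - g' t) (diff i y y')"
  using assms walk_diff[OF i] unfolding lap_def by fastforce

lemma lap_zero: "i < n \<Longrightarrow> lap n E (z i) (\<lambda>_. 0) (z i)"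
  using walk_zero[of i n] unfolding lap_def by fastforce

text \<open>Every vertex lies on a closed lap, and laps form a linear relation, so a lap \<open>y \<rightarrow> y\<close>
  can be cancelled from the sum of laps \<open>x \<rightarrow> y\<close> and \<open>y \<rightarrow> y'\<close>.\<close>
lemma almost_reduced_walk_laps:
  assumes ar: "almost_reduced n V E" and i: "i < n"
  shows "walk n E f g (k * n) \<Longrightarrow> f 0 \<in> V i \<Longrightarrow> \<exists>g'. lap n E (f 0) g' (f (k * n))"
proof (induction k)
  case 0
  then show ?case using almost_reduced_closed_lap[OF ar i] by simp
next
  case (Suc k)
  let ?y = "f (k * n)" and ?y' = "f (k * n + n)"
  have "walk n E f g (k * n)" using Suc.prems walk_take by (metis mult_Suc add.commute)
  then obtain g1 where lap1: "lap n E (f 0) g1 ?y" and y: "?y \<in> V i"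
    using Suc walk_level[OF _ _ i, of f g "k * n" "k * n"] i by (auto simp: mod_add_left_eq)
  have "walk n E (\<lambda>j. f (k * n + j)) (\<lambda>j. g (k * n + j)) n"
    using Suc.prems walk_drop by (metis mult_Suc add.commute)
  then obtain g2 where lap2: "lap n E ?y g2 ?y'" unfolding lap_def by fastforce
  obtain g3 where lap3: "lap n E ?y g3 ?y" using almost_reduced_closed_lap[OF ar i y] by blast
  have "lap n E (diff i (add i (f 0) ?y) ?y) (\<lambda>t. g1 t + g2 t - g3 t) (diff i (add i ?y ?y') ?y)"
    using lap_diff[OF i _ y lap_add[OF i Suc.prems(2) y lap1 lap2] lap3]
      vs_add_closed[OF vector_space[OF i] Suc.prems(2) y] by blast
  moreover have "?y' \<in> V i" using lap_level[OF lap2 y i] .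
  ultimately show ?case
    using vs_add_diff_cancel[OF vector_space[OF i] Suc.prems(2) y]
      vs_add_diff_cancel_left'[OF vector_space[OF i] _ y] by (auto simp: add.commute)
qed

text \<open>Connectedness and the levels force a path from \<open>v\<close> to \<open>w\<close> to go round the trellis a
  whole number of times, and almost reducedness shrinks it to a single lap. Merging \<open>v\<close> and
  \<open>w\<close> closes that lap; as the code does not change, some closed lap from level \<open>i\<close> carries
  the same labels.\<close>
lemma not_mergeable_if_connected_fragment_one_to_one:
  assumes ar: "almost_reduced n V E" and cn: "connected_trellis n V E"
    and fr: "fragment_one_to_one n V E"
  shows "\<not> mergeable n V E"
proof
  assume "mergeable n V E"
  then obtain i v w where i: "i < n" and v: "v \<in> V i" and w: "w \<in> V i" and vw: "v \<noteq> w"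
    and same_code: "code n (merge_V v w V) (merge_E v w E) = code n V E"
    unfolding mergeable_def by blast
  interpret M: trim_trellis n "merge_V v w V" "merge_E v w E"
    using trim_trellis_merge[OF i v w] .
  obtain m vs as where p: "is_path n E m vs as" "vs ! 0 = v" "vs ! m = w"
    using cn vw v w i unfolding connected_trellis_def vertices_def by blast
  have wm: "walk n E (nth vs) (nth as) m" using is_path_walk[OF p(1)] .
  then have "w \<in> V ((i + m) mod n)" using walk_level[OF wm _ i, of m] p v by simp
  then have "(i + m) mod n = i mod n" using level_unique[of "(i + m) mod n" i w] w i n_pos by simp
  then obtain k where "m = k * n"
    using mod_eq_dvd_iff_nat[of i "i + m" n] by (auto simp: dvd_def mult.commute)
  then obtain g where vw_lap: "lap n E v g w"
    using almost_reduced_walk_laps[OF ar i, of "nth vs" "nth as" k] wm p v by auto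
  have "lap n (merge_E v w E) (mg v w v) g (mg v w v)" "mg v w v \<in> merge_V v w V i"
    using lap_merge[OF vw_lap, of v w] v unfolding merge_V_def by (auto simp: mg_def)
  then have "rot n i g \<in> code n V E" using M.rot_in_code_iff[OF i] same_code by blast
  then obtain x where x: "x \<in> V i" "lap n E x g x" using rot_in_code_iff[OF i] by blast
  obtain f f' where "walk n E f g n" "f 0 = v" "f n = w" "walk n E f' g n" "f' 0 = x" "f' n = x"
    using vw_lap x unfolding lap_def by blast
  then show False
    using fragment_one_to_one_walks_eq[OF fr i, of f g f'] v x vw by (metis le_refl zero_le)
qed

lemma not_mergeable_zero_lap_comparable:
  assumes nm: "\<not> mergeable n V E" and i: "i < n" and y: "y \<in> V i"
  shows "(\<exists>g. lap n E (z i) g y) \<or> (\<exists>g. lap n E y g (z i))"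
  using not_mergeable_separating_lap[OF nm i vs_zero_closed[OF vector_space[OF i]] y] lap_zero[OF i]
  by (cases "y = z i") blast+

text \<open>The endpoints of laps leaving \<open>z i\<close> and the starting points of laps entering \<open>z i\<close>
  form two subspaces whose union is \<open>V i\<close>, so one of them is all of \<open>V i\<close>.\<close>
lemma not_mergeable_zero_laps:
  assumes nm: "\<not> mergeable n V E" and i: "i < n"
  shows "(\<forall>y\<in>V i. \<exists>g. lap n E (z i) g y) \<or> (\<forall>y\<in>V i. \<exists>g. lap n E y g (z i))"
proof (rule ccontr)
  assume "\<not> ?thesis"
  then obtain a b where a: "a \<in> V i" "\<nexists>g. lap n E (z i) g a" and b: "b \<in> V i" "\<nexists>g. lap n E b g (z i)"
    by blast
  note vs = vector_space[OF i]
  have z: "z i \<in> V i" using vs_zero_closed[OF vs] .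
  have ab: "add i a b \<in> V i" using vs_add_closed[OF vs a(1) b(1)] .
  have zz: "diff i (z i) (z i) = z i" using vs_diff_self[OF vs z] .
  obtain ga where ga: "lap n E a ga (z i)" using not_mergeable_zero_lap_comparable[OF nm i a(1)] a(2) by blast
  obtain gb where gb: "lap n E (z i) gb b" using not_mergeable_zero_lap_comparable[OF nm i b(1)] b(2) by blast
  consider g where "lap n E (z i) g (add i a b)" | g where "lap n E (add i a b) g (z i)"
    using not_mergeable_zero_lap_comparable[OF nm i ab] by blast
  then show False
  proof cases
    case 1
    then show False
      using lap_diff[OF i z z 1 gb] zz vs_add_diff_cancel[OF vs a(1) b(1)] a(2) by auto
  next
    case 2
    then show False
      using lap_diff[OF i ab a(1) 2 ga] zz vs_add_diff_cancel_left'[OF vs b(1) a(1)] b(2) by auto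
  qed
qed

lemma not_mergeable_laps_between:
  assumes nm: "\<not> mergeable n V E" and i: "i < n" and x: "x \<in> V i" and y: "y \<in> V i"
  shows "\<exists>g. lap n E x g y"
proof -
  note vs = vector_space[OF i]
  have z: "z i \<in> V i" using vs_zero_closed[OF vs] .
  consider "\<forall>y\<in>V i. \<exists>g. lap n E (z i) g y" | "\<forall>y\<in>V i. \<exists>g. lap n E y g (z i)"
    using not_mergeable_zero_laps[OF nm i] by blast
  then show ?thesis
  proof cases
    case 1
    obtain g y' where xy': "lap n E x g y'" using lap_from[OF x i] by blast
    then have y': "y' \<in> V i" using lap_level x i by blast
    obtain g' where "lap n E (z i) g' (diff i y y')"
      using 1 vs_add_closed[OF vs y vs_smult_closed[OF vs y']] by blast
    then show ?thesis
      using lap_add[OF i x z xy'] vs_add_zero_right[OF vs x] vs_add_diff_inverse[OF vs y y'] by metis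
  next
    case 2
    obtain g x' where x': "x' \<in> V i" and x'y: "lap n E x' g y" using lap_to[OF y i] by blast
    have d: "diff i x x' \<in> V i" using vs_add_closed[OF vs x vs_smult_closed[OF vs x']] .
    obtain g' where "lap n E (diff i x x') g' (z i)" using 2 d by blast
    then show ?thesis
      using lap_add[OF i x' d x'y] vs_add_zero_right[OF vs y] vs_add_diff_inverse[OF vs x x'] by metis
  qed
qed

lemma connected_if_not_mergeable:
  assumes nm: "\<not> mergeable n V E"
  shows "connected_trellis n V E"
  unfolding connected_trellis_def
proof (intro ballI impI)
  fix v w assume "v \<in> vertices n V" and "w \<in> vertices n V"
  then obtain i j where i: "i < n" "v \<in> V i" and j: "j < n" "w \<in> V j"
    unfolding vertices_def by blast
  define d where "d = (j + n - i) mod n"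
  obtain f g where fg: "walk n E f g d" "f 0 = v" using walk_from[OF i(2) i(1)] by blast
  have "(i + d) mod n = (j + n) mod n"
    using i j unfolding d_def by (simp add: mod_add_right_eq)
  then have "f d \<in> V j" using walk_level[OF fg(1) _ i(1), of d] fg(2) i j by simp
  then obtain g' where "lap n E (f d) g' w" using not_mergeable_laps_between[OF nm j(1) _ j(2)] by blast
  then obtain f' where f': "walk n E f' g' n" "f' 0 = f d" "f' n = w" unfolding lap_def by blast
  show "\<exists>m vs as. is_path n E m vs as \<and> vs ! 0 = v \<and> vs ! m = w"
    using walk_is_path[OF walk_append[OF fg(1) f'(1,2)]] fg(2) f'(3) n_pos
    by (intro exI[of _ "d + n"]) (force simp del: upt_Suc)
qed

text \<open>If \<open>D\<close> is closed, it is a second cycle with the labels of the zero cycle; otherwise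
  nonmergeability yields a lap between its ends whose labels carry no closed lap, although
  adding \<open>D\<close> closes it.\<close>
lemma zero_labelled_walk_eq_zero:
  assumes nm: "\<not> mergeable n V E" and oo: "one_to_one n V E" and i: "i < n"
    and wD: "walk n E D (\<lambda>_. 0) n" and D0: "D 0 \<in> V i" and j: "j \<le> n"
  shows "D j = z ((i + j) mod n)"
proof (cases "D n = D 0")
  case True
  have "walk n E (\<lambda>t. z ((i + t) mod n)) (\<lambda>_. 0) n" "z i \<in> V i"
    using walk_zero vs_zero_closed[OF vector_space[OF i]] by blast+
  then show ?thesis
    using one_to_one_closed_walks_eq[OF oo i wD _ D0 _ True _ j] i by simp
next
  case False
  note vs = vector_space[OF i]
  have Dn: "D n \<in> V i" using walk_level[OF wD D0 i, of n] i by simp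
  have lapD: "lap n E (D 0) (\<lambda>_. 0) (D n)" using wD unfolding lap_def by blast
  obtain g where sep: "lap n E (D 0) g (D n) \<or> lap n E (D n) g (D 0)"
    and open_lap: "\<forall>u\<in>V i. \<not> lap n E u g u"
    using not_mergeable_separating_lap[OF nm i D0 Dn] False by metis
  from sep have False
  proof
    assume l: "lap n E (D 0) g (D n)"
    show False
      using lap_diff[OF i D0 D0 l lapD] vs_diff_self[OF vs D0] vs_diff_self[OF vs Dn] open_lap
        vs_zero_closed[OF vs] by simp
  next
    assume l: "lap n E (D n) g (D 0)"
    show False
      using lap_add[OF i Dn D0 l lapD] vs_add_commute[OF vs Dn D0] open_lap
        vs_add_closed[OF vs Dn D0] by simp
  qed
  then show ?thesis ..
qed

text \<open>Two laps with equal labels differ by a lap with zero labels.\<close>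
lemma fragment_one_to_one_if_not_mergeable:
  assumes nm: "\<not> mergeable n V E" and oo: "one_to_one n V E"
  shows "fragment_one_to_one n V E"
  unfolding fragment_one_to_one_def
proof (intro allI impI)
  fix i vs as vs' as'
  assume i: "i < n" and H: "is_path n E n vs as \<and> vs ! 0 \<in> V i \<and> is_path n E n vs' as' \<and> vs' ! 0 \<in> V i
     \<and> (vs, as) \<noteq> (vs', as')"
  note vs = vector_space[OF i]
  show "as \<noteq> as'"
  proof
    assume "as = as'"
    then have p: "is_path n E n vs as" "is_path n E n vs' as" and s: "vs ! 0 \<in> V i" "vs' ! 0 \<in> V i"
      and "vs \<noteq> vs'" using H by auto
    define D where "D t = diff ((i + t) mod n) (vs ! t) (vs' ! t)" for t
    have wD: "walk n E D (\<lambda>_. 0) n"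
      using walk_diff[OF i is_path_walk[OF p(1)] is_path_walk[OF p(2)] s] unfolding D_def by simp
    have D0: "D 0 \<in> V i" unfolding D_def using vs_add_closed[OF vs s(1) vs_smult_closed[OF vs s(2)]] i by simp
    have "vs ! j = vs' ! j" if j: "j \<le> n" for j
    proof -
      let ?k = "(i + j) mod n"
      have "?k < n" using n_pos by simp
      moreover have "vs ! j \<in> V ?k" "vs' ! j \<in> V ?k"
        using walk_level[OF is_path_walk[OF p(1)] s(1) i j] walk_level[OF is_path_walk[OF p(2)] s(2) i j]
        by auto
      ultimately show ?thesis
        using vs_diff_eq_zeroD[OF vector_space] zero_labelled_walk_eq_zero[OF nm oo i wD D0 j]
        unfolding D_def by blast
    qed
    moreover have "length vs = Suc n" "length vs' = Suc n" using p unfolding is_path_def by auto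
    ultimately have "vs = vs'" by (simp add: nth_equalityI)
    with \<open>vs \<noteq> vs'\<close> show False ..
  qed
qed

end

lemma linear_trellisE:
  assumes "trellis n V E" and "linear_trellis n V E"
  obtains add z sm where "linear_trim_trellis n V E add z sm"
proof -
  obtain add z sm where L: "\<forall>i<n. vector_space_on (V i) (add i) (z i) (sm i)
        \<and> (z i, 0, z (nxt n i)) \<in> E i
        \<and> (\<forall>(x, a, y)\<in>E i. \<forall>(x', a', y')\<in>E i. (add i x x', a + a', add (nxt n i) y y') \<in> E i)
        \<and> (\<forall>s. \<forall>(x, a, y)\<in>E i. (sm i s x, s * a, sm (nxt n i) s y) \<in> E i)"
    using assms(2) unfolding linear_trellis_def by blast
  have "linear_trim_trellis n V E add z sm"
    by unfold_locales (use assms(1) L in fast)+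
  then show ?thesis by (rule that)
qed

theorem mainTheorem14:
  fixes n :: nat and V :: "nat \<Rightarrow> 'v set" and E :: "nat \<Rightarrow> ('v \<times> 'f::{field,finite} \<times> 'v) set"
  assumes "trellis n V E" and "linear_trellis n V E"
  shows "(\<not> mergeable n V E \<and> one_to_one n V E
            \<longrightarrow> connected_trellis n V E \<and> fragment_one_to_one n V E)
       \<and> (almost_reduced n V E \<and> connected_trellis n V E \<and> fragment_one_to_one n V E
            \<longrightarrow> \<not> mergeable n V E \<and> one_to_one n V E)"
proof -
  obtain add z sm where "linear_trim_trellis n V E add z sm"
    using linear_trellisE[OF assms] .
  then interpret linear_trim_trellis n V E add z sm .
  show ?thesis
    using connected_if_not_mergeable fragment_one_to_one_if_not_mergeable
      not_mergeable_if_connected_fragment_one_to_one one_to_one_if_fragment_one_to_one by blast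
qed

end
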